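(* Let $\mathcal{R}^{rsc}$ be a rich single-crossing domain of classical preferences on $\mathbb{Z}$, ordered by $\prec$. Then $(\mathcal{R}^{rsc},\prec)$ is a linear continuum, i.e. $\prec$ is a simple (linear) order, every nonempty subset of $\mathcal{R}^{rsc}$ that is bounded above (w.r.t. $\prec$) has a least upper bound in $\mathcal{R}^{rsc}$, and whenever $R'\prec R''$ there is $R\in\mathcal{R}^{rsc}$ with $R'\prec R\prec R''$. Moreover there is an order-preserving homeomorphism $h$ between $\mathcal{R}^{rsc}$ with the order topology and an open interval of $\mathbb{R}$ (hence $\mathbb{R}$) with the Euclidean topology; in particular the order topology on $\mathcal{R}^{rsc}$ is metrizable.
   Context: Let $\mathbb{Z}=[0,\infty)\times[0,1]$, with elements $(t,q)$ ($t$ a payment, $q$ a share or winning probability). For $x'=(t',q'),x''=(t'',q'')$ write $x'<x''$ if $t'<t''$ and $q'<q''$, and $x'\le x''$ if $x'=x''$ or $x'<x''$. A preference is a complete transitive binary relation $R$ on $\mathbb{Z}$ with strict part $P$ and indifference $I$ (decorations on $R$ carry over to $P,I$). Let $UC(R,z)=\{x:xRz\}$, $LC(R,z)=\{x:zRx\}$, $IC(R,z)=\{x:xIz\}$. $R$ is classical if: for all $q$, $t''>t'$ implies $(t',q)P(t'',q)$; for all $t$, $q''>q'$ implies $(t,q'')P(t,q')$; and $UC(R,z),LC(R,z)$ are closed in $\mathbb{Z}$ for every $z$. Two distinct classical preferences $R',R''$ satisfy the single-crossing property if for all $x,y\in\mathbb{Z}$ the set $IC(R',x)\cap IC(R'',y)$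 has at most one element. A rich single-crossing domain $\mathcal{R}^{rsc}$ is a set of classical preferences any two distinct members of which satisfy the single-crossing property, and such that for all $x'<x''$ there is $R\in\mathcal{R}^{rsc}$ with $x'Ix''$. For $z\in\mathbb{Z}$ let $\square(z)=\{x\in\mathbb{Z}:x\le z\}$; $R''$ cuts $R'$ from above at $z$ if $\square(z)\cap UC(R'',z)\subseteq\square(z)\cap UC(R',z)$. It is a known fact that for distinct $R',R''\in\mathcal{R}^{rsc}$, if $R''$ cuts $R'$ from above at some bundle $(t,q)$ with $t>0,q>0$, then it does so at every bundle. For distinct $R',R''\in\mathcal{R}^{rsc}$ write $R'\prec R''$ if $R''$ cuts $R'$ from above at every $z\in\mathbb{Z}$. The order topology on $\mathcal{R}^{rsc}$ is generated by the open intervals $]R',R''[=\{R:R'\prec R\prec R''\}$ together with the open rays. *)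

theory Defs
  imports "HOL-Analysis.Analysis"
begin

type_synonym bndl = "real \<times> real"
type_synonym pref = "bndl rel"

definition ZZ :: "bndl set" where
  "ZZ = {(t,q). 0 \<le> t \<and> 0 \<le> q \<and> q \<le> 1}"

definition bless :: "bndl \<Rightarrow> bndl \<Rightarrow> bool" where
  "bless x y \<longleftrightarrow> fst x < fst y \<and> snd x < snd y"

definition bleq :: "bndl \<Rightarrow> bndl \<Rightarrow> bool" where
  "bleq x y \<longleftrightarrow> x = y \<or> bless x y"

definition is_pref :: "pref \<Rightarrow> bool" where
  "is_pref R \<longleftrightarrow> R \<subseteq> ZZ \<times> ZZ
     \<and> (\<forall>x\<in>ZZ. \<forall>y\<in>ZZ. (x,y) \<in> R \<or> (y,x) \<in> R)
     \<and> trans R"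

definition sP :: "pref \<Rightarrow> bndl \<Rightarrow> bndl \<Rightarrow> bool" where
  "sP R x y \<longleftrightarrow> (x,y) \<in> R \<and> (y,x) \<notin> R"

definition sI :: "pref \<Rightarrow> bndl \<Rightarrow> bndl \<Rightarrow> bool" where
  "sI R x y \<longleftrightarrow> (x,y) \<in> R \<and> (y,x) \<in> R"

definition UC :: "pref \<Rightarrow> bndl \<Rightarrow> bndl set" where
  "UC R z = {x. (x,z) \<in> R}"

definition LC :: "pref \<Rightarrow> bndl \<Rightarrow> bndl set" where
  "LC R z = {x. (z,x) \<in> R}"

definition IC :: "pref \<Rightarrow> bndl \<Rightarrow> bndl set" where
  "IC R z = {x. sI R x z}"

definition classical :: "pref \<Rightarrow> bool" where
  "classical R \<longleftrightarrow> is_pref R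
     \<and> (\<forall>q t' t''. 0 \<le> q \<and> q \<le> 1 \<and> 0 \<le> t' \<and> t' < t'' \<longrightarrow> sP R (t',q) (t'',q))
     \<and> (\<forall>t q' q''. 0 \<le> t \<and> 0 \<le> q' \<and> q' < q'' \<and> q'' \<le> 1 \<longrightarrow> sP R (t,q'') (t,q'))
     \<and> (\<forall>z\<in>ZZ. closedin (subtopology euclidean ZZ) (UC R z)
               \<and> closedin (subtopology euclidean ZZ) (LC R z))"

definition single_crossing :: "pref \<Rightarrow> pref \<Rightarrow> bool" where
  "single_crossing R' R'' \<longleftrightarrow>
     (\<forall>x\<in>ZZ. \<forall>y\<in>ZZ. \<forall>a b. a \<in> IC R' x \<inter> IC R'' y \<and> b \<in> IC R' x \<inter> IC R'' y \<longrightarrow> a = b)"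

definition rich_single_crossing :: "pref set \<Rightarrow> bool" where
  "rich_single_crossing D \<longleftrightarrow>
     (\<forall>R\<in>D. classical R)
     \<and> (\<forall>R'\<in>D. \<forall>R''\<in>D. R' \<noteq> R'' \<longrightarrow> single_crossing R' R'')
     \<and> (\<forall>x'\<in>ZZ. \<forall>x''\<in>ZZ. bless x' x'' \<longrightarrow> (\<exists>R\<in>D. sI R x' x''))"

definition box :: "bndl \<Rightarrow> bndl set" where
  "box z = {x\<in>ZZ. bleq x z}"

definition cuts_from_above :: "pref \<Rightarrow> pref \<Rightarrow> bndl \<Rightarrow> bool" where
  "cuts_from_above R'' R' z \<longleftrightarrow> box z \<inter> UC R'' z \<subseteq> box z \<inter> UC R' z"

definition prec :: "pref \<Rightarrow> pref \<Rightarrow> bool" where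
  "prec R' R'' \<longleftrightarrow> R' \<noteq> R'' \<and> (\<forall>z\<in>ZZ. cuts_from_above R'' R' z)"

definition preceq :: "pref \<Rightarrow> pref \<Rightarrow> bool" where
  "preceq R' R'' \<longleftrightarrow> R' = R'' \<or> prec R' R''"

text \<open>Order topology on D generated by open intervals and open rays (D itself is
  added as a generator, which is harmless: it is open in any case).\<close>
definition order_top :: "pref set \<Rightarrow> pref topology" where
  "order_top D = topology_generated_by
     ({D}
      \<union> {{R\<in>D. prec R' R \<and> prec R R''} | R' R''. R' \<in> D \<and> R'' \<in> D}
      \<union> {{R\<in>D. prec R R''} | R''. R'' \<in> D}
      \<union> {{R\<in>D. prec R' R} | R'. R' \<in> D})"

end

theory Submission
  imports Defs
begin

text \<open>For distinct \<open>R1, R2\<close> and a bundle \<open>z\<close> with positive coordinates, single crossing makes the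
  indifference curves through \<open>z\<close> meet any monotone path below \<open>z\<close> at distinct points, so along
  the path one preference strictly prefers, and the other strictly disprefers, some bundle below \<open>z\<close>.
  Which of the two does so is locally constant, first in the height of the path and then in \<open>z\<close>,
  hence constant by connectedness; that direction decides which of \<open>R1, R2\<close> cuts the other from
  above everywhere, so \<open>\<prec>\<close> is linear.

  The indifference curve of \<open>R\<close> through \<open>(1,1)\<close> crosses the antidiagonal \<open>{(s, 1 - s)}\<close> in a
  single point, whose share \<open>diag_rank R\<close> is strictly increasing along \<open>\<prec>\<close> (cutting from above
  at \<open>(1,1)\<close>) and maps the domain onto \<open>(0,1)\<close> (richness). So \<open>\<prec>\<close> is order-isomorphic to
  \<open>(0,1)\<close>, which gives completeness, density and the homeomorphism.\<close>

section \<open>Classical preferences\<close>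

lemma mem_ZZ_iff: "x \<in> ZZ \<longleftrightarrow> 0 \<le> fst x \<and> 0 \<le> snd x \<and> snd x \<le> 1"
  by (cases x) (auto simp: ZZ_def)

lemma classical_in_ZZ: "classical R \<Longrightarrow> (x,y) \<in> R \<Longrightarrow> x \<in> ZZ \<and> y \<in> ZZ"
  unfolding classical_def is_pref_def by blast

lemma classical_total: "classical R \<Longrightarrow> x \<in> ZZ \<Longrightarrow> y \<in> ZZ \<Longrightarrow> (x,y) \<in> R \<or> (y,x) \<in> R"
  unfolding classical_def is_pref_def by blast

lemma classical_refl: "classical R \<Longrightarrow> x \<in> ZZ \<Longrightarrow> (x,x) \<in> R"
  using classical_total by blast

lemma classical_trans: "classical R \<Longrightarrow> (x,y) \<in> R \<Longrightarrow> (y,z) \<in> R \<Longrightarrow> (x,z) \<in> R"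
  unfolding classical_def is_pref_def trans_def by blast

lemma sP_trans: "classical R \<Longrightarrow> sP R a b \<Longrightarrow> sP R b c \<Longrightarrow> sP R a c"
  unfolding sP_def by (meson classical_trans)

lemma weak_sP_trans: "classical R \<Longrightarrow> (a,b) \<in> R \<Longrightarrow> sP R b c \<Longrightarrow> sP R a c"
  unfolding sP_def by (meson classical_trans)

lemma sP_sI_trans: "classical R \<Longrightarrow> sP R a b \<Longrightarrow> sI R b c \<Longrightarrow> sP R a c"
  unfolding sP_def sI_def by (meson classical_trans)

lemma sI_sP_trans: "classical R \<Longrightarrow> sI R a b \<Longrightarrow> sP R b c \<Longrightarrow> sP R a c"
  unfolding sP_def sI_def by (meson classical_trans)

lemma sI_sym: "sI R a b \<Longrightarrow> sI R b a"
  unfolding sI_def by auto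

lemma sP_asym: "sP R a b \<Longrightarrow> \<not> sP R b a"
  unfolding sP_def by auto

lemma sP_not_sI: "sP R a b \<Longrightarrow> \<not> sI R a b"
  unfolding sP_def sI_def by auto

lemma single_crossing_sym: "single_crossing R1 R2 \<Longrightarrow> single_crossing R2 R1"
  unfolding single_crossing_def by blast

lemma single_crossing_indiff_eq:
  assumes R: "classical R1" "classical R2" "single_crossing R1 R2"
    and z: "z \<in> ZZ" and w: "sI R1 w z" "sI R2 w z"
  shows "w = z"
proof -
  have "w \<in> IC R1 z \<inter> IC R2 z" "z \<in> IC R1 z \<inter> IC R2 z"
    using w classical_refl[OF R(1) z] classical_refl[OF R(2) z] by (auto simp: IC_def sI_def)
  then show ?thesis
    using R(3) z unfolding single_crossing_def by blast
qed

definition north_west :: "bndl \<Rightarrow> bndl \<Rightarrow> bool" where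
  "north_west u v \<longleftrightarrow> fst u \<le> fst v \<and> snd v \<le> snd u"

lemma classical_prefers_north_west:
  assumes R: "classical R" and xy: "x \<in> ZZ" "y \<in> ZZ" "north_west x y" "x \<noteq> y"
  shows "sP R x y"
proof -
  have cheaper: "sP R (t',q) (t'',q)" if "0 \<le> q" "q \<le> 1" "0 \<le> t'" "t' < t''" for q t' t''
    using R that unfolding classical_def by blast
  have larger: "sP R (t,q'') (t,q')" if "0 \<le> t" "0 \<le> q'" "q' < q''" "q'' \<le> 1" for t q' q''
    using R that unfolding classical_def by blast
  obtain a b c d where x: "x = (a,b)" and y: "y = (c,d)" by (cases x, cases y)
  with xy have ab: "0 \<le> a" "0 \<le> b" "b \<le> 1" and cd: "0 \<le> c" "0 \<le> d" "d \<le> 1"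
    and le: "a \<le> c" "d \<le> b" "a < c \<or> d < b"
    by (auto simp: mem_ZZ_iff north_west_def)
  consider "a < c" "d < b" | "a < c" "d = b" | "a = c" "d < b"
    using le by linarith
  then show ?thesis
  proof cases
    case 1
    then show ?thesis
      using sP_trans[OF R cheaper[of b a c] larger[of c d b]] ab cd x y by simp
  qed (use ab cd x y cheaper larger in auto)
qed

text \<open>Upper and lower contour sets of \<open>z\<close> are closed and cover \<open>ZZ\<close>, so a connected set meeting
  both meets the indifference curve through \<open>z\<close>.\<close>
lemma classical_indiff_in_connected:
  assumes R: "classical R" and S: "connected S" "S \<subseteq> ZZ" and z: "z \<in> ZZ"
    and a: "a \<in> S" "(a,z) \<in> R" and b: "b \<in> S" "(z,b) \<in> R"
  shows "\<exists>w\<in>S. sI R w z"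
proof -
  obtain C1 C2 where C: "closed C1" "UC R z = ZZ \<inter> C1" "closed C2" "LC R z = ZZ \<inter> C2"
    using R z unfolding classical_def closedin_closed by meson
  have "S \<subseteq> UC R z \<union> LC R z"
    using S(2) classical_total[OF R _ z] by (auto simp: UC_def LC_def)
  then have "S \<subseteq> C1 \<union> C2"
    using C by blast
  moreover have "a \<in> C1" "b \<in> C2"
    using C a b S(2) by (auto simp: UC_def LC_def)
  ultimately obtain w where "w \<in> S" "w \<in> C1" "w \<in> C2"
    using S(1) a(1) b(1) C(1,3) unfolding connected_closed by blast
  then show ?thesis
    using C S(2) by (auto simp: UC_def LC_def sI_def)
qed

lemma sP_open_left:
  assumes R: "classical R" and xy: "sP R x y"
  shows "\<exists>e>0. \<forall>x'\<in>ZZ. dist x' x < e \<longrightarrow> sP R x' y"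
proof -
  have Z: "x \<in> ZZ" "y \<in> ZZ"
    using xy classical_in_ZZ[OF R] unfolding sP_def by blast+
  then have "openin (top_of_set ZZ) (ZZ - LC R y)"
    using R unfolding classical_def closedin_def by auto
  moreover have "x \<in> ZZ - LC R y"
    using xy Z by (auto simp: LC_def sP_def)
  ultimately obtain e where "e > 0" "\<forall>x'\<in>ZZ. dist x' x < e \<longrightarrow> x' \<in> ZZ - LC R y"
    unfolding openin_euclidean_subtopology_iff by blast
  then show ?thesis
    using classical_total[OF R _ Z(2)] by (auto simp: LC_def sP_def intro!: exI[of _ e])
qed

lemma sP_open_right:
  assumes R: "classical R" and xy: "sP R x y"
  shows "\<exists>e>0. \<forall>y'\<in>ZZ. dist y' y < e \<longrightarrow> sP R x y'"
proof -
  have Z: "x \<in> ZZ" "y \<in> ZZ"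
    using xy classical_in_ZZ[OF R] unfolding sP_def by blast+
  then have "openin (top_of_set ZZ) (ZZ - UC R x)"
    using R unfolding classical_def closedin_def by auto
  moreover have "y \<in> ZZ - UC R x"
    using xy Z by (auto simp: UC_def sP_def)
  ultimately obtain e where "e > 0" "\<forall>y'\<in>ZZ. dist y' y < e \<longrightarrow> y' \<in> ZZ - UC R x"
    unfolding openin_euclidean_subtopology_iff by blast
  then show ?thesis
    using classical_total[OF R Z(1)] by (auto simp: UC_def sP_def intro!: exI[of _ e])
qed

lemma connected_dichotomy:
  fixes U :: "'a::metric_space set"
  assumes "connected U" "\<forall>x\<in>U. P x \<or> Q x" "\<forall>x\<in>U. \<not> (P x \<and> Q x)"
    "\<forall>x\<in>U. P x \<longrightarrow> (\<exists>e>0. \<forall>x'\<in>U. dist x' x < e \<longrightarrow> P x')"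
    "\<forall>x\<in>U. Q x \<longrightarrow> (\<exists>e>0. \<forall>x'\<in>U. dist x' x < e \<longrightarrow> Q x')"
  shows "(\<forall>x\<in>U. P x) \<or> (\<forall>x\<in>U. Q x)"
proof -
  have "openin (top_of_set U) {x\<in>U. P x}" "openin (top_of_set U) {x\<in>U. Q x}"
    using assms(4,5) by (auto simp: openin_euclidean_subtopology_iff)
  then show ?thesis
    using assms(1-3) unfolding connected_openin by blast
qed

section \<open>Linearity of the cutting order\<close>

text \<open>For \<open>q < zq\<close>, the path from \<open>(0,zq)\<close> down to \<open>(0,q)\<close> and then right to \<open>(zt,q)\<close>:
  a \<open>north_west\<close>-chain starting above and ending below the indifference curve through \<open>(zt,zq)\<close>.\<close>
definition elbow :: "real \<Rightarrow> real \<Rightarrow> real \<Rightarrow> bndl set" where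
  "elbow zt zq q = (\<lambda>r. (0,r)) ` {q..zq} \<union> (\<lambda>t. (t,q)) ` {0..zt}"

lemma elbow_iff:
  "w \<in> elbow zt zq q \<longleftrightarrow>
     (fst w = 0 \<and> q \<le> snd w \<and> snd w \<le> zq) \<or> (snd w = q \<and> 0 \<le> fst w \<and> fst w \<le> zt)"
  by (cases w) (auto simp: elbow_def image_iff)

lemma elbow_north_west_total:
  "u \<in> elbow zt zq q \<Longrightarrow> v \<in> elbow zt zq q \<Longrightarrow> north_west u v \<or> north_west v u"
  by (auto simp: elbow_iff north_west_def)

text \<open>The indifference curve of \<open>Rb\<close> through \<open>(zt,zq)\<close> meets the elbow strictly before that of \<open>Ra\<close>.\<close>
definition elbow_disagree :: "pref \<Rightarrow> pref \<Rightarrow> real \<Rightarrow> real \<Rightarrow> real \<Rightarrow> bool" where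
  "elbow_disagree Ra Rb zt zq q \<longleftrightarrow> (\<exists>w\<in>elbow zt zq q. sP Ra w (zt,zq) \<and> sP Rb (zt,zq) w)"

text \<open>A strict witness that \<open>Ra\<close> does not cut \<open>Rb\<close> from above at \<open>z\<close>.\<close>
definition disagree_below :: "pref \<Rightarrow> pref \<Rightarrow> bndl \<Rightarrow> bool" where
  "disagree_below Ra Rb z \<longleftrightarrow> (\<exists>m\<in>ZZ. bless m z \<and> sP Ra m z \<and> sP Rb z m)"

context
  fixes zt zq :: real
  assumes zt: "0 < zt" and zq: "0 < zq" "zq \<le> 1"
begin

lemma corner_in_ZZ: "(zt,zq) \<in> ZZ"
  using zt zq by (simp add: mem_ZZ_iff)

context
  fixes q :: real
  assumes q: "0 \<le> q" "q < zq"
begin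

lemma elbow_subset_ZZ: "elbow zt zq q \<subseteq> ZZ"
  using zt zq q by (auto simp: elbow_iff mem_ZZ_iff)

lemma connected_elbow: "connected (elbow zt zq q)"
  unfolding elbow_def
proof (rule connected_Un)
  have "(0,q) \<in> (\<lambda>r. (0::real, r)) ` {q..zq}" "(0,q) \<in> (\<lambda>t. (t, q)) ` {0..zt}"
    using q zt by (auto simp: image_iff)
  then show "(\<lambda>r. (0::real, r)) ` {q..zq} \<inter> (\<lambda>t. (t, q)) ` {0..zt} \<noteq> {}"
    by blast
qed (auto intro!: connected_continuous_image continuous_intros)

lemma corner_notin_elbow: "(zt,zq) \<notin> elbow zt zq q"
  using zt q by (simp add: elbow_iff)

lemma elbow_start_better: "classical R \<Longrightarrow> sP R (0,zq) (zt,zq)"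
  by (rule classical_prefers_north_west) (use zt zq in \<open>auto simp: mem_ZZ_iff north_west_def\<close>)

lemma elbow_end_worse: "classical R \<Longrightarrow> sP R (zt,zq) (zt,q)"
  by (rule classical_prefers_north_west) (use zt zq q in \<open>auto simp: mem_ZZ_iff north_west_def\<close>)

lemma elbow_meets_indiff_curve: "classical R \<Longrightarrow> \<exists>w\<in>elbow zt zq q. sI R w (zt,zq)"
  by (rule classical_indiff_in_connected[OF _ connected_elbow elbow_subset_ZZ corner_in_ZZ,
        of _ "(0,zq)" "(zt,q)"])
     (use q zt elbow_start_better elbow_end_worse in \<open>auto simp: elbow_iff sP_def\<close>)

lemma elbow_between:
  assumes u: "u \<in> elbow zt zq q" and v: "v \<in> elbow zt zq q"
    and uv: "north_west u v" "u \<noteq> v"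
  shows "\<exists>m\<in>elbow zt zq q. north_west u m \<and> north_west m v \<and> m \<noteq> u \<and> m \<noteq> v"
proof (cases "fst u = 0 \<and> fst v = 0")
  case True
  then show ?thesis using u v uv
    by (intro bexI[of _ "(0, (snd u + snd v)/2)"]) (auto simp: elbow_iff north_west_def prod_eq_iff)
next
  case vertical: False
  show ?thesis
  proof (cases "snd u = q \<and> snd v = q")
    case True
    then show ?thesis using u v uv
      by (intro bexI[of _ "((fst u + fst v)/2, q)"]) (auto simp: elbow_iff north_west_def prod_eq_iff)
  next
    case False
    then show ?thesis using vertical u v uv
      by (intro bexI[of _ "(0, q)"]) (auto simp: elbow_iff north_west_def prod_eq_iff)
  qed
qed

end

lemma elbow_disagree_asym:
  assumes Ra: "classical Ra" and Rb: "classical Rb" and q: "0 \<le> q" "q < zq"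
    and ab: "elbow_disagree Ra Rb zt zq q"
  shows "\<not> elbow_disagree Rb Ra zt zq q"
proof
  assume "elbow_disagree Rb Ra zt zq q"
  then obtain w' where w': "w' \<in> elbow zt zq q" "sP Rb w' (zt,zq)" "sP Ra (zt,zq) w'"
    unfolding elbow_disagree_def by blast
  obtain w where w: "w \<in> elbow zt zq q" "sP Ra w (zt,zq)" "sP Rb (zt,zq) w"
    using ab unfolding elbow_disagree_def by blast
  have Z: "w \<in> ZZ" "w' \<in> ZZ"
    using elbow_subset_ZZ[OF q] w w' by auto
  have "w \<noteq> w'"
    using w w' sP_asym by blast
  with elbow_north_west_total[OF w(1) w'(1)] show False
    using classical_prefers_north_west[OF Rb Z] classical_prefers_north_west[OF Ra Z(2,1)]
      sP_trans[OF Rb w'(2) w(3)] sP_trans[OF Ra w(2) w'(3)] sP_asym by metis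
qed

text \<open>By single crossing the two indifference curves through \<open>(zt,zq)\<close> meet the elbow at
  distinct points; any point of the elbow strictly between them is a witness.\<close>
lemma elbow_disagree_total:
  assumes R: "classical R1" "classical R2" "single_crossing R1 R2" and q: "0 \<le> q" "q < zq"
  shows "elbow_disagree R1 R2 zt zq q \<or> elbow_disagree R2 R1 zt zq q"
proof -
  have witness: "elbow_disagree Rb Ra zt zq q"
    if Ra: "classical Ra" and Rb: "classical Rb"
      and wa: "wa \<in> elbow zt zq q" "sI Ra wa (zt,zq)" and wb: "wb \<in> elbow zt zq q" "sI Rb wb (zt,zq)"
      and nw: "north_west wa wb" and ne: "wa \<noteq> wb"
    for Ra Rb wa wb
  proof -
    obtain m where m: "m \<in> elbow zt zq q" "north_west wa m" "north_west m wb" "m \<noteq> wa" "m \<noteq> wb"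
      using elbow_between[OF q wa(1) wb(1) nw ne] by blast
    have Z: "wa \<in> ZZ" "wb \<in> ZZ" "m \<in> ZZ"
      using elbow_subset_ZZ[OF q] wa wb m by auto
    have "sP Ra (zt,zq) m"
      using sI_sP_trans[OF Ra sI_sym[OF wa(2)]] classical_prefers_north_west[OF Ra Z(1,3) m(2)] m(4)
      by auto
    moreover have "sP Rb m (zt,zq)"
      using sP_sI_trans[OF Rb _ wb(2)] classical_prefers_north_west[OF Rb Z(3,2) m(3)] m(5)
      by auto
    ultimately show ?thesis
      using m(1) unfolding elbow_disagree_def by blast
  qed
  obtain w1 where w1: "w1 \<in> elbow zt zq q" "sI R1 w1 (zt,zq)"
    using elbow_meets_indiff_curve[OF q R(1)] by blast
  obtain w2 where w2: "w2 \<in> elbow zt zq q" "sI R2 w2 (zt,zq)"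
    using elbow_meets_indiff_curve[OF q R(2)] by blast
  have "w1 \<noteq> w2"
    using single_crossing_indiff_eq[OF R corner_in_ZZ w1(2)] w2(2) w1(1) corner_notin_elbow[OF q]
    by auto
  then show ?thesis
    using elbow_north_west_total[OF w1(1) w2(1)] witness[OF R(2,1) w2 w1] witness[OF R(1,2) w1 w2]
    by auto
qed

lemma elbow_disagree_open:
  assumes Ra: "classical Ra" and Rb: "classical Rb" and ab: "elbow_disagree Ra Rb zt zq q"
  shows "\<exists>e>0. \<forall>q'\<in>{0..<zq}. dist q' q < e \<longrightarrow> elbow_disagree Ra Rb zt zq q'"
proof -
  obtain w where w: "w \<in> elbow zt zq q" "sP Ra w (zt,zq)" "sP Rb (zt,zq) w"
    using ab unfolding elbow_disagree_def by blast
  obtain e1 where e1: "e1 > 0" "\<forall>x'\<in>ZZ. dist x' w < e1 \<longrightarrow> sP Ra x' (zt,zq)"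
    using sP_open_left[OF Ra w(2)] by blast
  obtain e2 where e2: "e2 > 0" "\<forall>x'\<in>ZZ. dist x' w < e2 \<longrightarrow> sP Rb (zt,zq) x'"
    using sP_open_right[OF Rb w(3)] by blast
  show ?thesis
  proof (intro exI[of _ "min e1 e2"] conjI ballI impI)
    fix q' assume q': "q' \<in> {0..<zq}" and d: "dist q' q < min e1 e2"
    txt \<open>Move \<open>w\<close> to the elbow at height \<open>q'\<close> by at most \<open>\<bar>q' - q\<bar>\<close>.\<close>
    define w' where "w' = (if snd w = q then (fst w, q') else (fst w, max (snd w) q'))"
    have w': "w' \<in> elbow zt zq q'"
      using w(1) q' unfolding w'_def elbow_iff by auto
    then have "w' \<in> ZZ"
      using elbow_subset_ZZ[of q'] q' by auto
    moreover have "dist w' w \<le> dist q' q"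
    proof (cases "snd w = q")
      case False
      then have "dist (max (snd w) q') (snd w) \<le> dist q' q"
        using w(1) by (auto simp: elbow_iff dist_real_def max_def)
      then show ?thesis
        using False by (cases w) (simp add: w'_def dist_Pair_Pair)
    qed (cases w, simp add: w'_def dist_Pair_Pair)
    ultimately show "elbow_disagree Ra Rb zt zq q'"
      using e1 e2 d w' unfolding elbow_disagree_def by (meson le_less_trans min_less_iff_conj)
  qed (use e1 e2 in simp)
qed

lemma disagree_below_iff_elbow_disagree:
  assumes Ra: "classical Ra" and Rb: "classical Rb"
  shows "disagree_below Ra Rb (zt,zq) \<longleftrightarrow> (\<exists>q\<in>{0..<zq}. elbow_disagree Ra Rb zt zq q)"
proof
  assume "disagree_below Ra Rb (zt,zq)"
  then obtain m where m: "m \<in> ZZ" "bless m (zt,zq)" "sP Ra m (zt,zq)" "sP Rb (zt,zq) m"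
    unfolding disagree_below_def by blast
  then have "m \<in> elbow zt zq (snd m)"
    by (auto simp: elbow_iff mem_ZZ_iff bless_def)
  then show "\<exists>q\<in>{0..<zq}. elbow_disagree Ra Rb zt zq q"
    using m by (auto simp: elbow_disagree_def mem_ZZ_iff bless_def)
next
  assume "\<exists>q\<in>{0..<zq}. elbow_disagree Ra Rb zt zq q"
  then obtain q w where q: "0 \<le> q" "q < zq"
    and w: "w \<in> elbow zt zq q" "sP Ra w (zt,zq)" "sP Rb (zt,zq) w"
    unfolding elbow_disagree_def by auto
  have "w \<noteq> (zt,q)"
    using w(2) elbow_end_worse[OF q Ra] sP_asym by blast
  moreover have "w \<noteq> (0,zq)"
    using w(3) elbow_start_better[OF q Rb] sP_asym by blast
  ultimately have "bless w (zt,zq)"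
    using w(1) q zt by (cases w) (auto simp: bless_def elbow_iff)
  then show "disagree_below Ra Rb (zt,zq)"
    unfolding disagree_below_def using elbow_subset_ZZ[OF q] w by blast
qed

text \<open>Which of the two curves meets the elbow first does not depend on the height of the elbow,
  since \<open>{0..<zq}\<close> is connected.\<close>
lemma disagree_below_asym:
  assumes R: "classical R1" "classical R2" "single_crossing R1 R2"
    and "disagree_below R1 R2 (zt,zq)"
  shows "\<not> disagree_below R2 R1 (zt,zq)"
proof -
  have "(\<forall>q\<in>{0..<zq}. elbow_disagree R1 R2 zt zq q) \<or> (\<forall>q\<in>{0..<zq}. elbow_disagree R2 R1 zt zq q)"
    by (rule connected_dichotomy)
       (use elbow_disagree_total[OF R] elbow_disagree_asym[OF R(1,2)] elbow_disagree_asym[OF R(2,1)]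
            elbow_disagree_open[OF R(1,2)] elbow_disagree_open[OF R(2,1)] in auto)
  then show ?thesis
    using assms(4) disagree_below_iff_elbow_disagree[OF R(1,2)] disagree_below_iff_elbow_disagree[OF R(2,1)]
      elbow_disagree_asym[OF R(1,2)] by fastforce
qed

lemma disagree_below_total:
  assumes R: "classical R1" "classical R2" "single_crossing R1 R2"
  shows "disagree_below R1 R2 (zt,zq) \<or> disagree_below R2 R1 (zt,zq)"
  using elbow_disagree_total[OF R, of 0] zq disagree_below_iff_elbow_disagree[OF R(1,2)]
    disagree_below_iff_elbow_disagree[OF R(2,1)] by auto

lemma not_cuts_imp_disagree_below:
  assumes R: "classical Ra" "classical Rb" "single_crossing Ra Rb"
    and not_cuts: "\<not> cuts_from_above Ra Rb (zt,zq)"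
  shows "disagree_below Ra Rb (zt,zq)"
proof -
  obtain x where x: "x \<in> box (zt,zq)" "(x,(zt,zq)) \<in> Ra" "(x,(zt,zq)) \<notin> Rb"
    using not_cuts unfolding cuts_from_above_def UC_def by blast
  have "x \<noteq> (zt,zq)"
    using x(3) classical_refl[OF R(2) corner_in_ZZ] by auto
  then have xZ: "bless x (zt,zq)" "x \<in> ZZ"
    using x(1) by (auto simp: box_def bleq_def)
  then have q: "0 \<le> snd x" "snd x < zq" and x_elbow: "x \<in> elbow zt zq (snd x)"
    by (auto simp: bless_def mem_ZZ_iff elbow_iff)
  have x_worse: "sP Rb (zt,zq) x"
    using x(3) classical_total[OF R(2) xZ(2) corner_in_ZZ] by (auto simp: sP_def)
  have "\<not> elbow_disagree Rb Ra zt zq (snd x)"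
  proof
    assume "elbow_disagree Rb Ra zt zq (snd x)"
    then obtain w where w: "w \<in> elbow zt zq (snd x)" "sP Rb w (zt,zq)" "sP Ra (zt,zq) w"
      unfolding elbow_disagree_def by blast
    have "w \<in> ZZ"
      using elbow_subset_ZZ[OF q] w by auto
    moreover have "sP Ra x w" "sP Rb w x"
      using weak_sP_trans[OF R(1) x(2) w(3)] sP_trans[OF R(2) w(2) x_worse] .
    ultimately show False
      using elbow_north_west_total[OF x_elbow w(1)] xZ(2) sP_asym
        classical_prefers_north_west[OF R(2), of x w] classical_prefers_north_west[OF R(1), of w x]
      by metis
  qed
  then show ?thesis
    using elbow_disagree_total[OF R q] disagree_below_iff_elbow_disagree[OF R(1,2)] q by auto
qed

end

definition ZZ_pos :: "bndl set" where
  "ZZ_pos = {0<..} \<times> {0<..1}"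

lemma mem_ZZ_pos_iff: "z \<in> ZZ_pos \<longleftrightarrow> z \<in> ZZ \<and> 0 < fst z \<and> 0 < snd z"
  by (cases z) (auto simp: ZZ_pos_def mem_ZZ_iff)

lemma connected_ZZ_pos: "connected ZZ_pos"
  unfolding ZZ_pos_def by (intro convex_connected convex_Times) auto

lemma disagree_below_open:
  assumes Ra: "classical Ra" and Rb: "classical Rb" and ab: "disagree_below Ra Rb z"
  shows "\<exists>e>0. \<forall>z'\<in>ZZ_pos. dist z' z < e \<longrightarrow> disagree_below Ra Rb z'"
proof -
  obtain m where m: "m \<in> ZZ" "bless m z" "sP Ra m z" "sP Rb z m"
    using ab unfolding disagree_below_def by blast
  obtain e1 where e1: "e1 > 0" "\<forall>x'\<in>ZZ. dist x' z < e1 \<longrightarrow> sP Ra m x'"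
    using sP_open_right[OF Ra m(3)] by blast
  obtain e2 where e2: "e2 > 0" "\<forall>x'\<in>ZZ. dist x' z < e2 \<longrightarrow> sP Rb x' m"
    using sP_open_left[OF Rb m(4)] by blast
  define e3 where "e3 = min (fst z - fst m) (snd z - snd m)"
  have e3: "e3 > 0"
    using m(2) by (auto simp: e3_def bless_def)
  show ?thesis
  proof (intro exI[of _ "min e1 (min e2 e3)"] conjI ballI impI)
    fix z' assume z': "z' \<in> ZZ_pos" and d: "dist z' z < min e1 (min e2 e3)"
    have "dist (fst z') (fst z) < e3" "dist (snd z') (snd z) < e3"
      using d dist_fst_le[of z' z] dist_snd_le[of z' z] by linarith+
    then have "bless m z'"
      unfolding bless_def e3_def dist_real_def by auto
    then show "disagree_below Ra Rb z'"
      unfolding disagree_below_def using m(1) e1 e2 d z' mem_ZZ_pos_iff by auto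
  qed (use e1 e2 e3 in simp)
qed

lemma cuts_from_above_boundary:
  assumes Rb: "classical Rb" and z: "z \<in> ZZ" "z \<notin> ZZ_pos"
  shows "cuts_from_above Ra Rb z"
proof -
  have "box z \<subseteq> {z}"
    using z by (auto simp: box_def bleq_def bless_def mem_ZZ_iff mem_ZZ_pos_iff)
  then show ?thesis
    using classical_refl[OF Rb z(1)] unfolding cuts_from_above_def UC_def by auto
qed

lemma disagree_below_everywhere_imp_cuts:
  assumes R: "classical R1" "classical R2" "single_crossing R1 R2"
    and below: "\<forall>z\<in>ZZ_pos. disagree_below R1 R2 z" and z: "z \<in> ZZ"
  shows "cuts_from_above R2 R1 z"
proof (cases "z \<in> ZZ_pos")
  case True
  then obtain zt zq where zz: "z = (zt,zq)" "0 < zt" "0 < zq" "zq \<le> 1"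
    by (cases z) (auto simp: ZZ_pos_def)
  have "\<not> disagree_below R2 R1 z"
    using disagree_below_asym[OF zz(2-4) R] below True zz(1) by blast
  then show ?thesis
    using not_cuts_imp_disagree_below[OF zz(2-4) R(2,1) single_crossing_sym[OF R(3)]] zz(1) by blast
qed (use cuts_from_above_boundary[OF R(1) z] in simp)

text \<open>The direction of disagreement is locally constant on the connected set \<open>ZZ_pos\<close>.\<close>
lemma single_crossing_cuts_everywhere:
  assumes R: "classical R1" "classical R2" "single_crossing R1 R2"
  shows "(\<forall>z\<in>ZZ. cuts_from_above R2 R1 z) \<or> (\<forall>z\<in>ZZ. cuts_from_above R1 R2 z)"
proof -
  have R': "classical R2" "classical R1" "single_crossing R2 R1"
    using R single_crossing_sym by auto
  have pos: "\<exists>zt zq. z = (zt,zq) \<and> 0 < zt \<and> 0 < zq \<and> zq \<le> 1" if "z \<in> ZZ_pos" for z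
    using that by (cases z) (auto simp: ZZ_pos_def)
  have "(\<forall>z\<in>ZZ_pos. disagree_below R1 R2 z) \<or> (\<forall>z\<in>ZZ_pos. disagree_below R2 R1 z)"
    by (rule connected_dichotomy[OF connected_ZZ_pos])
       (use pos disagree_below_total[OF _ _ _ R] disagree_below_asym[OF _ _ _ R]
            disagree_below_open[OF R(1,2)] disagree_below_open[OF R(2,1)] in metis)+
  then show ?thesis
    using disagree_below_everywhere_imp_cuts[OF R] disagree_below_everywhere_imp_cuts[OF R'] by blast
qed

section \<open>The antidiagonal coordinate\<close>

definition antidiag :: "bndl set" where
  "antidiag = (\<lambda>s. (s, 1 - s)) ` {0..1}"

lemma antidiag_iff: "w \<in> antidiag \<longleftrightarrow> 0 \<le> fst w \<and> fst w \<le> 1 \<and> snd w = 1 - fst w"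
  by (cases w) (auto simp: antidiag_def image_iff)

lemma antidiag_subset_ZZ: "antidiag \<subseteq> ZZ"
  by (auto simp: antidiag_iff mem_ZZ_iff)

lemma connected_antidiag: "connected antidiag"
  unfolding antidiag_def by (intro connected_continuous_image continuous_intros) simp

definition diag_point :: "pref \<Rightarrow> bndl" where
  "diag_point R = (SOME w. w \<in> antidiag \<and> sI R w (1,1))"

definition diag_rank :: "pref \<Rightarrow> real" where
  "diag_rank R = snd (diag_point R)"

lemma one_one_in_ZZ: "(1,1) \<in> ZZ"
  by (simp add: mem_ZZ_iff)

lemma antidiag_ends:
  assumes R: "classical R"
  shows "sP R (0,1) (1,1)" "sP R (1,1) (1,0)"
  by (rule classical_prefers_north_west[OF R], auto simp: mem_ZZ_iff north_west_def)+

lemma diag_point: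
  assumes R: "classical R"
  shows "diag_point R \<in> antidiag" "sI R (diag_point R) (1,1)"
proof -
  have "\<exists>w\<in>antidiag. sI R w (1,1)"
    by (rule classical_indiff_in_connected[OF R connected_antidiag antidiag_subset_ZZ one_one_in_ZZ,
          of "(0,1)" "(1,0)"])
       (use antidiag_ends[OF R] in \<open>auto simp: antidiag_iff sP_def\<close>)
  then show "diag_point R \<in> antidiag" "sI R (diag_point R) (1,1)"
    unfolding diag_point_def by (metis (mono_tags, lifting) someI_ex)+
qed

lemma diag_point_unique:
  assumes R: "classical R" and w: "w \<in> antidiag" "sI R w (1,1)"
  shows "w = diag_point R"
proof (rule ccontr)
  assume ne: "w \<noteq> diag_point R"
  have Z: "w \<in> ZZ" "diag_point R \<in> ZZ"
    using antidiag_subset_ZZ w diag_point[OF R] by auto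
  have "north_west w (diag_point R) \<or> north_west (diag_point R) w"
    using w diag_point[OF R] by (auto simp: antidiag_iff north_west_def)
  then have "sP R w (diag_point R) \<or> sP R (diag_point R) w"
    using classical_prefers_north_west[OF R] Z ne by metis
  then show False
    using w(2) diag_point(2)[OF R] unfolding sP_def sI_def by (meson R classical_trans)
qed

lemma diag_point_bless:
  assumes R: "classical R"
  shows "bless (diag_point R) (1,1)"
proof -
  have "diag_point R \<noteq> (0,1)" "diag_point R \<noteq> (1,0)"
    using antidiag_ends[OF R] diag_point(2)[OF R] sP_not_sI sI_sym by metis+
  then show ?thesis
    using diag_point(1)[OF R] by (cases "diag_point R") (auto simp: antidiag_iff bless_def)
qed

lemma diag_rank_bounds: "classical R \<Longrightarrow> 0 < diag_rank R \<and> diag_rank R < 1"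
  using diag_point_bless[of R] diag_point[of R] by (auto simp: diag_rank_def bless_def antidiag_iff)

lemma diag_rank_eq_imp_diag_point_eq:
  "classical R1 \<Longrightarrow> classical R2 \<Longrightarrow> diag_rank R1 = diag_rank R2 \<Longrightarrow> diag_point R1 = diag_point R2"
  using diag_point(1)[of R1] diag_point(1)[of R2] by (auto simp: diag_rank_def antidiag_iff prod_eq_iff)

lemma single_crossing_diag_rank_neq:
  assumes R: "classical R1" "classical R2" "single_crossing R1 R2"
  shows "diag_rank R1 \<noteq> diag_rank R2"
proof
  assume "diag_rank R1 = diag_rank R2"
  then have "diag_point R1 = diag_point R2"
    using diag_rank_eq_imp_diag_point_eq R by blast
  then have "diag_point R1 = (1,1)"
    using single_crossing_indiff_eq[OF R one_one_in_ZZ] diag_point(2)[OF R(1)] diag_point(2)[OF R(2)]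
    by auto
  then show False
    using diag_point(1)[OF R(1)] by (simp add: antidiag_iff)
qed

text \<open>Otherwise the diagonal point of \<open>R2\<close> would be \<open>R1\<close>-worse than \<open>(1,1)\<close> although it is
  \<open>R2\<close>-indifferent to it, so \<open>R2\<close> would not cut \<open>R1\<close> from above at \<open>(1,1)\<close>.\<close>
lemma single_crossing_prec_imp_diag_rank_less:
  assumes R: "classical R1" "classical R2" "single_crossing R1 R2" and "prec R1 R2"
  shows "diag_rank R1 < diag_rank R2"
proof (rule ccontr)
  assume "\<not> diag_rank R1 < diag_rank R2"
  then have "diag_rank R2 < diag_rank R1"
    using single_crossing_diag_rank_neq[OF R] by linarith
  then have "north_west (diag_point R1) (diag_point R2)" "diag_point R1 \<noteq> diag_point R2"
    using diag_point(1)[OF R(1)] diag_point(1)[OF R(2)]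
    by (auto simp: diag_rank_def antidiag_iff north_west_def)
  then have "sP R1 (diag_point R1) (diag_point R2)"
    using classical_prefers_north_west[OF R(1)] antidiag_subset_ZZ diag_point(1) R by blast
  then have worse: "sP R1 (1,1) (diag_point R2)"
    using sI_sP_trans[OF R(1) sI_sym[OF diag_point(2)[OF R(1)]]] by blast
  have "diag_point R2 \<in> box (1,1) \<inter> UC R2 (1,1)"
    using diag_point_bless[OF R(2)] diag_point[OF R(2)] antidiag_subset_ZZ
    by (auto simp: box_def bleq_def UC_def sI_def)
  then have "(diag_point R2, (1,1)) \<in> R1"
    using \<open>prec R1 R2\<close> one_one_in_ZZ by (auto simp: prec_def cuts_from_above_def UC_def)
  then show False
    using worse by (simp add: sP_def)
qed

locale rich_sc_domain =
  fixes D :: "pref set"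
  assumes rich_sc: "rich_single_crossing D"
begin

lemma member_classical: "R \<in> D \<Longrightarrow> classical R"
  using rich_sc by (simp add: rich_single_crossing_def)

lemma member_single_crossing: "R1 \<in> D \<Longrightarrow> R2 \<in> D \<Longrightarrow> R1 \<noteq> R2 \<Longrightarrow> single_crossing R1 R2"
  using rich_sc by (simp add: rich_single_crossing_def)

lemma prec_linear: "R1 \<in> D \<Longrightarrow> R2 \<in> D \<Longrightarrow> R1 \<noteq> R2 \<Longrightarrow> prec R1 R2 \<or> prec R2 R1"
  using single_crossing_cuts_everywhere[OF member_classical member_classical member_single_crossing]
  by (auto simp: prec_def)

lemma prec_imp_diag_rank_less: "R1 \<in> D \<Longrightarrow> R2 \<in> D \<Longrightarrow> prec R1 R2 \<Longrightarrow> diag_rank R1 < diag_rank R2"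
  using single_crossing_prec_imp_diag_rank_less[OF member_classical member_classical
      member_single_crossing]
  by (auto simp: prec_def)

lemma prec_iff_diag_rank_less: "R1 \<in> D \<Longrightarrow> R2 \<in> D \<Longrightarrow> prec R1 R2 \<longleftrightarrow> diag_rank R1 < diag_rank R2"
  using prec_linear prec_imp_diag_rank_less by fastforce

lemma inj_on_diag_rank: "inj_on diag_rank D"
  using prec_linear prec_imp_diag_rank_less by (fastforce simp: inj_on_def)

lemma preceq_iff_diag_rank_le: "R1 \<in> D \<Longrightarrow> R2 \<in> D \<Longrightarrow> preceq R1 R2 \<longleftrightarrow> diag_rank R1 \<le> diag_rank R2"
  using prec_iff_diag_rank_less inj_on_diag_rank by (auto simp: preceq_def inj_on_def)

lemma prec_trans: "R1 \<in> D \<Longrightarrow> R2 \<in> D \<Longrightarrow> R3 \<in> D \<Longrightarrow> prec R1 R2 \<Longrightarrow> prec R2 R3 \<Longrightarrow> prec R1 R3"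
  by (meson prec_iff_diag_rank_less order.strict_trans)

text \<open>Richness supplies a preference through \<open>(1 - x, x)\<close> and \<open>(1,1)\<close>.\<close>
lemma diag_rank_image: "diag_rank ` D = {0<..<1}"
proof
  show "diag_rank ` D \<subseteq> {0<..<1}"
    using diag_rank_bounds member_classical by auto
  show "{0<..<1} \<subseteq> diag_rank ` D"
  proof
    fix x :: real assume x: "x \<in> {0<..<1}"
    then have "bless (1-x, x) (1,1)" "(1-x, x) \<in> ZZ"
      by (auto simp: bless_def mem_ZZ_iff)
    then obtain R where R: "R \<in> D" "sI R (1-x, x) (1,1)"
      using rich_sc one_one_in_ZZ unfolding rich_single_crossing_def by blast
    then have "(1-x, x) = diag_point R"
      using diag_point_unique[OF member_classical] x by (auto simp: antidiag_iff)
    then show "x \<in> diag_rank ` D"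
      using R(1) unfolding diag_rank_def by (metis image_eqI snd_conv)
  qed
qed

lemma diag_rank_surj: "0 < x \<Longrightarrow> x < 1 \<Longrightarrow> \<exists>R\<in>D. diag_rank R = x"
  using diag_rank_image by (metis greaterThanLessThan_iff imageE)

lemma prec_dense:
  assumes R: "R1 \<in> D" "R2 \<in> D" "prec R1 R2"
  shows "\<exists>R\<in>D. prec R1 R \<and> prec R R2"
proof -
  obtain x where x: "diag_rank R1 < x" "x < diag_rank R2"
    using prec_imp_diag_rank_less[OF R] dense by blast
  moreover have "0 < x" "x < 1"
    using x diag_rank_bounds[OF member_classical[OF R(1)]]
      diag_rank_bounds[OF member_classical[OF R(2)]] by linarith+
  ultimately show ?thesis
    using diag_rank_surj R prec_iff_diag_rank_less by metis
qed

lemma prec_complete: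
  assumes S: "S \<subseteq> D" "S \<noteq> {}" and b: "b \<in> D" "\<forall>s\<in>S. preceq s b"
  shows "\<exists>u\<in>D. (\<forall>s\<in>S. preceq s u) \<and> (\<forall>v\<in>D. (\<forall>s\<in>S. preceq s v) \<longrightarrow> preceq u v)"
proof -
  define \<sigma> where "\<sigma> = Sup (diag_rank ` S)"
  have "\<forall>s\<in>S. diag_rank s \<le> diag_rank b"
    using S b preceq_iff_diag_rank_le by blast
  then have "bdd_above (diag_rank ` S)"
    by (auto intro: bdd_aboveI2)
  then have upper: "diag_rank s \<le> \<sigma>" if "s \<in> S" for s
    unfolding \<sigma>_def using that by (auto intro: cSup_upper)
  have least: "\<sigma> \<le> diag_rank v" if "v \<in> D" "\<forall>s\<in>S. preceq s v" for v
  proof -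
    have "\<forall>s\<in>S. diag_rank s \<le> diag_rank v"
      using that S(1) preceq_iff_diag_rank_le by blast
    then show ?thesis
      unfolding \<sigma>_def using S(2) by (intro cSup_least) auto
  qed
  obtain s0 where "s0 \<in> S"
    using S by blast
  then have "0 < \<sigma>" "\<sigma> < 1"
    using upper[of s0] least[OF b] S diag_rank_bounds[OF member_classical] b(1) by force+
  then obtain u where u: "u \<in> D" "diag_rank u = \<sigma>"
    using diag_rank_surj by blast
  show ?thesis
  proof (intro bexI[OF _ u(1)] conjI ballI impI)
    show "preceq s u" if "s \<in> S" for s
      using that upper u S preceq_iff_diag_rank_le by auto
    show "preceq u v" if "v \<in> D" "\<forall>s\<in>S. preceq s v" for v
      using that least u preceq_iff_diag_rank_le by auto
  qed
qed

end

section \<open>The order topology\<close>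

definition order_generators :: "pref set \<Rightarrow> pref set set" where
  "order_generators D = {D}
      \<union> {{R\<in>D. prec R' R \<and> prec R R''} | R' R''. R' \<in> D \<and> R'' \<in> D}
      \<union> {{R\<in>D. prec R R''} | R''. R'' \<in> D}
      \<union> {{R\<in>D. prec R' R} | R'. R' \<in> D}"

lemma order_top_eq: "order_top D = topology_generated_by (order_generators D)"
  unfolding order_top_def order_generators_def ..

lemma order_generatorsE:
  assumes "V \<in> order_generators D"
  obtains "V = D"
    | R' R'' where "R' \<in> D" "R'' \<in> D" "V = {R\<in>D. prec R' R \<and> prec R R''}"
    | R'' where "R'' \<in> D" "V = {R\<in>D. prec R R''}"
    | R' where "R' \<in> D" "V = {R\<in>D. prec R' R}"
  using assms unfolding order_generators_def by (auto simp only: Un_iff singleton_iff mem_Collect_eq)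

lemma order_generators_subset: "V \<in> order_generators D \<Longrightarrow> V \<subseteq> D"
  by (erule order_generatorsE) auto

lemma topspace_order_top: "topspace (order_top D) = D"
proof -
  have "D \<in> order_generators D"
    by (simp add: order_generators_def)
  then show ?thesis
    unfolding order_top_eq topology_generated_by_topspace using order_generators_subset by blast
qed

lemma open_map_order_top:
  fixes h :: "pref \<Rightarrow> real"
  assumes inj: "inj_on h D"
    and prec_iff: "\<And>R1 R2. R1 \<in> D \<Longrightarrow> R2 \<in> D \<Longrightarrow> prec R1 R2 \<longleftrightarrow> h R1 < h R2"
  shows "open_map (order_top D) (top_of_set (h ` D)) h"
proof -
  have open_interval: "openin (top_of_set (h ` D)) (h ` {R\<in>D. h R \<in> I})" if "open I" for I
  proof -
    have "h ` {R\<in>D. h R \<in> I} = h ` D \<inter> I" by blast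
    then show ?thesis
      using that by (simp add: openin_open_Int)
  qed
  have image_generator: "openin (top_of_set (h ` D)) (h ` V)" if "V \<in> order_generators D" for V
    using that
  proof (cases rule: order_generatorsE)
    case (2 R' R'')
    then have "V = {R\<in>D. h R \<in> {h R'<..<h R''}}"
      using prec_iff by (auto cong: conj_cong)
    then show ?thesis
      using open_interval[of "{h R'<..<h R''}"] by simp
  next
    case (3 R'')
    then have "V = {R\<in>D. h R \<in> {..<h R''}}"
      using prec_iff by (auto cong: conj_cong)
    then show ?thesis
      using open_interval[of "{..<h R''}"] by simp
  next
    case (4 R')
    then have "V = {R\<in>D. h R \<in> {h R'<..}}"
      using prec_iff by (auto cong: conj_cong)
    then show ?thesis
      using open_interval[of "{h R'<..}"] by simp
  qed simp
  have "V \<subseteq> D \<and> openin (top_of_set (h ` D)) (h ` V)" if "generate_topology_on (order_generators D) V" for V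
    using that
  proof (induction rule: generate_topology_on.induct)
    case (Int a b)
    then show ?case
      using inj_on_image_Int[OF inj, of a b] by auto
  next
    case (UN K)
    then show ?case by (auto simp: image_Union)
  next
    case (Basis s)
    then show ?case
      using image_generator order_generators_subset by blast
  qed simp
  then show ?thesis
    unfolding open_map_def order_top_eq openin_topology_generated_by_iff by blast
qed

lemma continuous_map_order_top:
  fixes h :: "pref \<Rightarrow> real"
  assumes prec_iff: "\<And>R1 R2. R1 \<in> D \<Longrightarrow> R2 \<in> D \<Longrightarrow> prec R1 R2 \<longleftrightarrow> h R1 < h R2"
    and open_image: "open (h ` D)"
  shows "continuous_map (order_top D) (top_of_set (h ` D)) h"
  unfolding continuous_map_def topspace_order_top
proof (intro conjI allI impI)
  fix U assume U: "openin (top_of_set (h ` D)) U"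
  show "openin (order_top D) {R \<in> D. h R \<in> U}"
  proof (subst openin_subopen, intro ballI)
    fix R assume R: "R \<in> {R \<in> D. h R \<in> U}"
    obtain e where e: "e > 0" "ball (h R) e \<subseteq> U"
      using R openin_open_trans[OF U open_image] open_contains_ball by blast
    have "h R - e/2 \<in> ball (h R) e" "h R + e/2 \<in> ball (h R) e"
      using e by (auto simp: dist_real_def)
    then have "h R - e/2 \<in> h ` D" "h R + e/2 \<in> h ` D"
      using e openin_imp_subset[OF U] by blast+
    then obtain Ra Rb where Ra: "Ra \<in> D" "h Ra = h R - e/2" and Rb: "Rb \<in> D" "h Rb = h R + e/2"
      by (metis imageE)
    define T where "T = {R'\<in>D. prec Ra R' \<and> prec R' Rb}"
    have "openin (order_top D) T"
      unfolding order_top_eq T_def using Ra Rb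
      by (intro topology_generated_by_Basis) (auto simp: order_generators_def)
    moreover have "R \<in> T"
      using R Ra Rb e prec_iff unfolding T_def by auto
    moreover have "T \<subseteq> {R \<in> D. h R \<in> U}"
    proof
      fix R' assume "R' \<in> T"
      then have "R' \<in> D" "h R' \<in> ball (h R) e"
        using Ra Rb prec_iff unfolding T_def by (auto simp: dist_real_def)
      then show "R' \<in> {R \<in> D. h R \<in> U}"
        using e(2) by blast
    qed
    ultimately show "\<exists>T. openin (order_top D) T \<and> R \<in> T \<and> T \<subseteq> {R \<in> D. h R \<in> U}"
      by blast
  qed
qed auto

lemma homeomorphic_map_order_top:
  fixes h :: "pref \<Rightarrow> real"
  assumes "inj_on h D"
    and "\<And>R1 R2. R1 \<in> D \<Longrightarrow> R2 \<in> D \<Longrightarrow> prec R1 R2 \<longleftrightarrow> h R1 < h R2"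
    and "open (h ` D)"
  shows "homeomorphic_map (order_top D) (top_of_set (h ` D)) h"
  by (rule bijective_open_imp_homeomorphic_map)
    (simp_all add: assms continuous_map_order_top open_map_order_top topspace_order_top)

context rich_sc_domain
begin

lemma homeomorphic_map_diag_rank:
  "homeomorphic_map (order_top D) (top_of_set (diag_rank ` D)) diag_rank"
  using homeomorphic_map_order_top[OF inj_on_diag_rank prec_iff_diag_rank_less] diag_rank_image
  by simp

lemma order_top_homeomorphic_interval:
  "\<exists>h :: pref \<Rightarrow> real. \<exists>a b :: ereal. a < b
     \<and> h ` D = {x. a < ereal x \<and> ereal x < b}
     \<and> (\<forall>R1\<in>D. \<forall>R2\<in>D. prec R1 R2 \<longrightarrow> h R1 < h R2)
     \<and> homeomorphic_map (order_top D) (subtopology euclideanreal (h ` D)) h"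
proof (rule exI[of _ diag_rank], rule exI[of _ 0], rule exI[of _ 1], intro conjI)
  show "diag_rank ` D = {x. 0 < ereal x \<and> ereal x < 1}"
    using diag_rank_image by auto
  show "\<forall>R1\<in>D. \<forall>R2\<in>D. prec R1 R2 \<longrightarrow> diag_rank R1 < diag_rank R2"
    using prec_imp_diag_rank_less by blast
qed (simp_all add: homeomorphic_map_diag_rank)

lemma metrizable_order_top: "metrizable_space (order_top D)"
proof -
  have "order_top D homeomorphic_space top_of_set (diag_rank ` D)"
    using homeomorphic_map_diag_rank homeomorphic_map_maps homeomorphic_space_def by blast
  then show ?thesis
    using homeomorphic_metrizable_space metrizable_space_subtopology metrizable_space_euclidean
    by blast
qed

end

theorem theorem1:
  fixes D :: "pref set"
  assumes "rich_single_crossing D"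
  shows "(\<forall>R\<in>D. \<not> prec R R)
     \<and> (\<forall>R1\<in>D. \<forall>R2\<in>D. \<forall>R3\<in>D. prec R1 R2 \<and> prec R2 R3 \<longrightarrow> prec R1 R3)
     \<and> (\<forall>R1\<in>D. \<forall>R2\<in>D. R1 \<noteq> R2 \<longrightarrow> prec R1 R2 \<or> prec R2 R1)
     \<and> (\<forall>S. S \<subseteq> D \<and> S \<noteq> {} \<and> (\<exists>b\<in>D. \<forall>s\<in>S. preceq s b) \<longrightarrow>
          (\<exists>u\<in>D. (\<forall>s\<in>S. preceq s u) \<and> (\<forall>v\<in>D. (\<forall>s\<in>S. preceq s v) \<longrightarrow> preceq u v)))
     \<and> (\<forall>R1\<in>D. \<forall>R2\<in>D. prec R1 R2 \<longrightarrow> (\<exists>R\<in>D. prec R1 R \<and> prec R R2))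
     \<and> (\<exists>h :: pref \<Rightarrow> real. \<exists>a b :: ereal. a < b
          \<and> h ` D = {x. a < ereal x \<and> ereal x < b}
          \<and> (\<forall>R1\<in>D. \<forall>R2\<in>D. prec R1 R2 \<longrightarrow> h R1 < h R2)
          \<and> homeomorphic_map (order_top D) (subtopology euclideanreal (h ` D)) h)
     \<and> metrizable_space (order_top D)"
proof -
  interpret rich_sc_domain D
    using assms by unfold_locales
  show ?thesis
  proof (intro conjI)
    show "\<forall>R\<in>D. \<not> prec R R"
      by (simp add: prec_def)
    show "\<forall>R1\<in>D. \<forall>R2\<in>D. \<forall>R3\<in>D. prec R1 R2 \<and> prec R2 R3 \<longrightarrow> prec R1 R3"
      using prec_trans by blast
    show "\<forall>R1\<in>D. \<forall>R2\<in>D. R1 \<noteq> R2 \<longrightarrow> prec R1 R2 \<or> prec R2 R1"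
      using prec_linear by blast
    show "\<forall>S. S \<subseteq> D \<and> S \<noteq> {} \<and> (\<exists>b\<in>D. \<forall>s\<in>S. preceq s b) \<longrightarrow>
          (\<exists>u\<in>D. (\<forall>s\<in>S. preceq s u) \<and> (\<forall>v\<in>D. (\<forall>s\<in>S. preceq s v) \<longrightarrow> preceq u v))"
      using prec_complete by blast
    show "\<forall>R1\<in>D. \<forall>R2\<in>D. prec R1 R2 \<longrightarrow> (\<exists>R\<in>D. prec R1 R \<and> prec R R2)"
      using prec_dense by blast
  qed (fact order_top_homeomorphic_interval metrizable_order_top)+
qed

end
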